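(* Let $y=Dx+w$ as in the context with $x\ne0$, and suppose that $\max_{1\le j\le M}\|D[j]^*w\|_2<\tau$ for some $\tau>0$. If $$(1-(d-1)\nu)x_{\max}>2\tau+(2s-1)d\mu_Bx_{\max},$$ then $\max_{j\in S}\|D[j]^*y\|_2>\max_{j\notin S}\|D[j]^*y\|_2$. If instead the stronger condition $$(1-(d-1)\nu)x_{\min}>2\tau+(2s-1)d\mu_Bx_{\max}$$ holds, then $\min_{j\in S}\|D[j]^*y\|_2>\max_{j\notin S}\|D[j]^*y\|_2$.
   Context: Setting: $N=Md$. For $v\in\mathbb{C}^N$, $v[i]=(v_{(i-1)d+1},\dots,v_{id})^T$ is its $i$-th block ($1\le i\le M$); for a matrix $A$ with $N$ columns, $A[i]$ is the submatrix of columns $(i-1)d+1,\dots,id$. The block support is $\mathrm{supp}(v)=\{i:v[i]\ne0\}$. $x\in\mathbb{C}^N$, $S=\mathrm{supp}(x)$, $s=|S|$, $x_{\max}=\max_{i\in S}\|x[i]\|_2$, $x_{\min}=\min_{i\in S}\|x[i]\|_2$. $D\in\mathbb{C}^{L\times N}$ has columns $d_1,\dots,d_N$ with $\|d_i\|_2=1$; $w\in\mathbb{C}^L$ arbitrary. Block coherence $\mu_B=\max_{i\ne j}\frac1d\|D[i]^*D[j]\|$ (spectral norm); sub-coherence $\nu=\max_{1\le\ell\le M}\max_{(\ell-1)d+1\le i\ne j\le\ell d}|d_i^*d_j|$. *)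

theory Defs
  imports Complex_Main
begin

text \<open>Conventions: indices are 0-based. A vector in C^N is a function nat => complex,
  only its values at 0..N-1 matter. A matrix D in C^(L x N) is D :: nat => nat => complex,
  D r c being the entry in row r < L, column c < N. With N = M*d, block i (i < M) of a
  vector consists of the entries i*d, ..., i*d + d - 1; D[i] consists of those columns.\<close>

definition vec2norm :: "nat \<Rightarrow> (nat \<Rightarrow> complex) \<Rightarrow> real" where
  "vec2norm n v = sqrt (\<Sum>k<n. (cmod (v k))\<^sup>2)"

definition blk :: "nat \<Rightarrow> (nat \<Rightarrow> complex) \<Rightarrow> nat \<Rightarrow> (nat \<Rightarrow> complex)" where
  "blk d v i = (\<lambda>k. v (i * d + k))"

definition blk_supp :: "nat \<Rightarrow> nat \<Rightarrow> (nat \<Rightarrow> complex) \<Rightarrow> nat set" where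
  "blk_supp M d v = {i. i < M \<and> (\<exists>k<d. v (i * d + k) \<noteq> 0)}"

definition mat_vec :: "nat \<Rightarrow> (nat \<Rightarrow> nat \<Rightarrow> complex) \<Rightarrow> (nat \<Rightarrow> complex) \<Rightarrow> (nat \<Rightarrow> complex)" where
  "mat_vec N D x = (\<lambda>r. \<Sum>c<N. D r c * x c)"

definition blk_adj_vec :: "nat \<Rightarrow> nat \<Rightarrow> (nat \<Rightarrow> nat \<Rightarrow> complex) \<Rightarrow> nat \<Rightarrow> (nat \<Rightarrow> complex) \<Rightarrow> (nat \<Rightarrow> complex)" where
  "blk_adj_vec L d D j y = (\<lambda>k. \<Sum>r<L. cnj (D r (j * d + k)) * y r)"

definition blk_gram :: "nat \<Rightarrow> nat \<Rightarrow> (nat \<Rightarrow> nat \<Rightarrow> complex) \<Rightarrow> nat \<Rightarrow> nat \<Rightarrow> (nat \<Rightarrow> nat \<Rightarrow> complex)" where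
  "blk_gram L d D i j = (\<lambda>k l. \<Sum>r<L. cnj (D r (i * d + k)) * D r (j * d + l))"

definition spec_norm :: "nat \<Rightarrow> (nat \<Rightarrow> nat \<Rightarrow> complex) \<Rightarrow> real" where
  "spec_norm n A = Sup {vec2norm n (\<lambda>k. \<Sum>l<n. A k l * v l) | v. vec2norm n v \<le> 1}"

text \<open>block coherence; maximum over an empty index set (M = 1) taken to be 0\<close>
definition block_coherence :: "nat \<Rightarrow> nat \<Rightarrow> nat \<Rightarrow> (nat \<Rightarrow> nat \<Rightarrow> complex) \<Rightarrow> real" where
  "block_coherence L M d D =
     Max (insert 0 {spec_norm d (blk_gram L d D i j) / real d | i j. i < M \<and> j < M \<and> i \<noteq> j})"

text \<open>sub-coherence; maximum over an empty index set (d = 1) taken to be 0\<close>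
definition sub_coherence :: "nat \<Rightarrow> nat \<Rightarrow> nat \<Rightarrow> (nat \<Rightarrow> nat \<Rightarrow> complex) \<Rightarrow> real" where
  "sub_coherence L M d D =
     Max (insert 0 {cmod (\<Sum>r<L. cnj (D r (l * d + a)) * D r (l * d + b)) | l a b.
                      l < M \<and> a < d \<and> b < d \<and> a \<noteq> b})"

definition max0 :: "nat set \<Rightarrow> (nat \<Rightarrow> real) \<Rightarrow> real" where
  "max0 A f = Max (insert 0 (f ` A))"

end

theory Submission
  imports Defs "HOL-Analysis.Convex" "HOL-Analysis.L2_Norm"
begin

(* Proof idea (block orthogonal matching pursuit, one step).  Write G(j,i) = D[j]^* D[i] and
   y = D x + w.  Since x vanishes off its block support S,
     D[j]^* y = (sum over i in S of G(j,i) x[i]) + D[j]^* w.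
   Every cross term G(j,i) x[i] with i <> j has norm at most d muB xmax (definition of the
   block coherence), and the noise term has norm below tau.  Hence a block j outside S has
   correlation below  s d muB xmax + tau.  For j in S the diagonal block G(j,j) has unit
   diagonal (unit columns) and off-diagonal entries bounded by nu, so it shrinks no vector by
   more than the factor 1 - (d-1) nu; this gives the lower bound
     (1 - (d-1) nu) |x[j]| - (s-1) d muB xmax - tau.
   Comparing the two bounds (threshold_separation) under either recovery condition yields the
   theorem. *)

section \<open>The Euclidean norm of a finite vector\<close>

lemma vec2norm_L2_set: "vec2norm n v = L2_set (\<lambda>k. cmod (v k)) {..<n}"
  by (simp add: vec2norm_def L2_set_def)

lemma vec2norm_nonneg: "0 \<le> vec2norm n v"
  by (simp add: vec2norm_L2_set)

lemma vec2norm_cong: "(\<And>k. k < n \<Longrightarrow> u k = v k) \<Longrightarrow> vec2norm n u = vec2norm n v"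
  unfolding vec2norm_def by (intro arg_cong[where f=sqrt] sum.cong) auto

lemma vec2norm_eq_0_iff: "vec2norm n v = 0 \<longleftrightarrow> (\<forall>k<n. v k = 0)"
  by (auto simp: vec2norm_L2_set L2_set_eq_0_iff)

lemma vec2norm_component: "k < n \<Longrightarrow> cmod (v k) \<le> vec2norm n v"
  unfolding vec2norm_L2_set by (rule member_le_L2_set) auto

lemma vec2norm_scale: "vec2norm n (\<lambda>k. c * v k) = cmod c * vec2norm n v"
  unfolding vec2norm_L2_set by (simp add: norm_mult L2_set_right_distrib)

lemma vec2norm_add: "vec2norm n (\<lambda>k. u k + v k) \<le> vec2norm n u + vec2norm n v"
proof -
  have "vec2norm n (\<lambda>k. u k + v k) \<le> L2_set (\<lambda>k. cmod (u k) + cmod (v k)) {..<n}"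
    unfolding vec2norm_L2_set by (rule L2_set_mono) (simp_all add: norm_triangle_ineq)
  also have "\<dots> \<le> vec2norm n u + vec2norm n v"
    unfolding vec2norm_L2_set by (rule L2_set_triangle_ineq)
  finally show ?thesis .
qed

lemma vec2norm_reverse_triangle: "vec2norm n u - vec2norm n r \<le> vec2norm n (\<lambda>k. u k + r k)"
proof -
  have "vec2norm n u = vec2norm n (\<lambda>k. (u k + r k) + (-1) * r k)" by simp
  also have "\<dots> \<le> vec2norm n (\<lambda>k. u k + r k) + vec2norm n (\<lambda>k. (-1) * r k)"
    by (rule vec2norm_add)
  also have "vec2norm n (\<lambda>k. (-1) * r k) = vec2norm n r" by (subst vec2norm_scale) simp
  finally show ?thesis by simp
qed

lemma vec2norm_sum:
  "finite I \<Longrightarrow> vec2norm n (\<lambda>k. \<Sum>i\<in>I. f i k) \<le> (\<Sum>i\<in>I. vec2norm n (f i))"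
proof (induction I rule: finite_induct)
  case empty
  then show ?case by (simp add: vec2norm_def)
next
  case (insert a F)
  have "vec2norm n (\<lambda>k. \<Sum>i\<in>insert a F. f i k) = vec2norm n (\<lambda>k. f a k + (\<Sum>i\<in>F. f i k))"
    using insert by simp
  also have "\<dots> \<le> vec2norm n (f a) + vec2norm n (\<lambda>k. \<Sum>i\<in>F. f i k)" by (rule vec2norm_add)
  also have "\<dots> \<le> vec2norm n (f a) + (\<Sum>i\<in>F. vec2norm n (f i))" using insert by simp
  finally show ?case using insert by simp
qed

section \<open>Square matrices acting on vectors\<close>

definition mat_app :: "nat \<Rightarrow> (nat \<Rightarrow> nat \<Rightarrow> complex) \<Rightarrow> (nat \<Rightarrow> complex) \<Rightarrow> (nat \<Rightarrow> complex)" where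
  "mat_app n A v = (\<lambda>k. \<Sum>l<n. A k l * v l)"

text \<open>The set whose supremum is the spectral norm is bounded (by the entrywise 1-norm),
  so the supremum really dominates its elements.\<close>
lemma spec_norm_bdd:
  "bdd_above {vec2norm n (\<lambda>k. \<Sum>l<n. A k l * v l) | v. vec2norm n v \<le> 1}"
proof (rule bdd_aboveI[of _ "\<Sum>k<n. \<Sum>l<n. cmod (A k l)"], clarify)
  fix u assume u: "vec2norm n u \<le> 1"
  have "vec2norm n (\<lambda>k. \<Sum>l<n. A k l * u l) \<le> (\<Sum>k<n. cmod (\<Sum>l<n. A k l * u l))"
    unfolding vec2norm_L2_set by (rule L2_set_le_sum) simp
  also have "\<dots> \<le> (\<Sum>k<n. \<Sum>l<n. cmod (A k l) * cmod (u l))"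
    by (intro sum_mono order.trans[OF norm_sum]) (simp add: norm_mult)
  also have "\<dots> \<le> (\<Sum>k<n. \<Sum>l<n. cmod (A k l))"
    using order.trans[OF vec2norm_component u]
    by (intro sum_mono) (simp add: mult_left_le)
  finally show "vec2norm n (\<lambda>k. \<Sum>l<n. A k l * u l) \<le> (\<Sum>k<n. \<Sum>l<n. cmod (A k l))" .
qed

lemma spec_norm_upper: "vec2norm n v \<le> 1 \<Longrightarrow> vec2norm n (mat_app n A v) \<le> spec_norm n A"
  unfolding spec_norm_def mat_app_def by (rule cSup_upper[OF _ spec_norm_bdd]) blast

lemma spec_norm_nonneg: "0 \<le> spec_norm n A"
  using spec_norm_upper[of n "\<lambda>_. 0" A] by (simp add: vec2norm_def mat_app_def)

lemma mat_app_norm_le: "vec2norm n (mat_app n A v) \<le> spec_norm n A * vec2norm n v"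
proof (cases "vec2norm n v = 0")
  case True
  then have "mat_app n A v = (\<lambda>k. 0)"
    unfolding mat_app_def by (auto simp: vec2norm_eq_0_iff)
  moreover have "vec2norm n (\<lambda>k. 0) = 0" by (simp add: vec2norm_eq_0_iff)
  ultimately show ?thesis using True by simp
next
  case False
  define c where "c = vec2norm n v"
  have c: "c > 0" using False vec2norm_nonneg[of n v] c_def by linarith
  define u where "u = (\<lambda>l. complex_of_real (1 / c) * v l)"
  have "vec2norm n u = 1" using c unfolding u_def vec2norm_scale norm_of_real c_def by simp
  then have "vec2norm n (mat_app n A u) \<le> spec_norm n A" by (simp add: spec_norm_upper)
  moreover have "mat_app n A v = (\<lambda>k. complex_of_real c * mat_app n A u k)"
    using c unfolding mat_app_def u_def by (simp add: sum_distrib_left)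
  ultimately show ?thesis
    using c by (simp add: vec2norm_scale c_def mult.commute)
qed

lemma sum_mat_app_norm_le:
  assumes "finite T"
    and "\<And>i. i \<in> T \<Longrightarrow> spec_norm n (A i) \<le> c"
    and "\<And>i. i \<in> T \<Longrightarrow> vec2norm n (v i) \<le> X"
  shows "vec2norm n (\<lambda>k. \<Sum>i\<in>T. mat_app n (A i) (v i) k) \<le> real (card T) * (c * X)"
proof -
  have "vec2norm n (\<lambda>k. \<Sum>i\<in>T. mat_app n (A i) (v i) k) \<le> (\<Sum>i\<in>T. vec2norm n (mat_app n (A i) (v i)))"
    by (rule vec2norm_sum[OF assms(1)])
  also have "\<dots> \<le> (\<Sum>i\<in>T. c * X)"
  proof (rule sum_mono)
    fix i assume i: "i \<in> T"
    have "spec_norm n (A i) * vec2norm n (v i) \<le> c * X"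
      using assms(2,3)[OF i] spec_norm_nonneg[of n "A i"] vec2norm_nonneg[of n "v i"]
      by (intro mult_mono) simp_all
    then show "vec2norm n (mat_app n (A i) (v i)) \<le> c * X"
      using mat_app_norm_le order.trans by blast
  qed
  finally show ?thesis by simp
qed

lemma offdiag_row_sq_le:
  fixes A :: "nat \<Rightarrow> nat \<Rightarrow> complex"
  assumes bnd: "\<And>l. l < n \<Longrightarrow> l \<noteq> k \<Longrightarrow> cmod (A k l) \<le> \<nu>" and k: "k < n"
  shows "(cmod (\<Sum>l\<in>{..<n}-{k}. A k l * v l))\<^sup>2
           \<le> \<nu>\<^sup>2 * (real n - 1) * ((\<Sum>l<n. (cmod (v l))\<^sup>2) - (cmod (v k))\<^sup>2)"
proof -
  let ?T = "{..<n} - {k}"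
  have "cmod (\<Sum>l\<in>?T. A k l * v l) \<le> (\<Sum>l\<in>?T. \<nu> * cmod (v l))"
    using bnd by (intro order.trans[OF norm_sum] sum_mono) (auto simp: norm_mult mult_right_mono)
  then have "(cmod (\<Sum>l\<in>?T. A k l * v l))\<^sup>2 \<le> (\<Sum>l\<in>?T. \<nu> * cmod (v l))\<^sup>2"
    by (rule power_mono) simp
  also have "\<dots> \<le> (\<Sum>l\<in>?T. (\<nu> * cmod (v l))\<^sup>2) * real (card ?T)"
    by (rule sum_squared_le_sum_of_squares)
  also have "\<dots> = \<nu>\<^sup>2 * (real n - 1) * (\<Sum>l\<in>?T. (cmod (v l))\<^sup>2)"
    using k by (simp add: power_mult_distrib sum_distrib_left sum_distrib_right of_nat_diff mult_ac)
  also have "(\<Sum>l\<in>?T. (cmod (v l))\<^sup>2) = (\<Sum>l<n. (cmod (v l))\<^sup>2) - (cmod (v k))\<^sup>2"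
    using k by (simp add: sum_diff1)
  finally show ?thesis .
qed

lemma offdiag_norm_le:
  fixes A :: "nat \<Rightarrow> nat \<Rightarrow> complex"
  assumes bnd: "\<And>k l. k < n \<Longrightarrow> l < n \<Longrightarrow> k \<noteq> l \<Longrightarrow> cmod (A k l) \<le> \<nu>" and nu: "0 \<le> \<nu>"
  shows "vec2norm n (\<lambda>k. \<Sum>l\<in>{..<n}-{k}. A k l * v l) \<le> (real n - 1) * \<nu> * vec2norm n v"
proof (cases "n = 0")
  case True
  then show ?thesis by (simp add: vec2norm_def)
next
  case False
  define tot where "tot = (\<Sum>l<n. (cmod (v l))\<^sup>2)"
  have tot: "0 \<le> tot" unfolding tot_def by (simp add: sum_nonneg)
  have "(\<Sum>k<n. (cmod (\<Sum>l\<in>{..<n}-{k}. A k l * v l))\<^sup>2)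
          \<le> (\<Sum>k<n. \<nu>\<^sup>2 * (real n - 1) * (tot - (cmod (v k))\<^sup>2))"
    unfolding tot_def by (intro sum_mono offdiag_row_sq_le bnd) auto
  also have "\<dots> = \<nu>\<^sup>2 * (real n - 1) * (real n * tot - tot)"
    by (simp add: sum_distrib_left[symmetric] sum_subtractf tot_def[symmetric])
  also have "\<dots> = ((real n - 1) * \<nu> * sqrt tot)\<^sup>2"
    using tot by (simp add: power_mult_distrib algebra_simps power2_eq_square)
  finally have "(vec2norm n (\<lambda>k. \<Sum>l\<in>{..<n}-{k}. A k l * v l))\<^sup>2 \<le> ((real n - 1) * \<nu> * vec2norm n v)\<^sup>2"
    by (simp add: vec2norm_def tot_def sum_nonneg)
  moreover have "0 \<le> (real n - 1) * \<nu> * vec2norm n v"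
    using False nu vec2norm_nonneg[of n v] by simp
  ultimately show ?thesis by (rule power2_le_imp_le)
qed

lemma near_identity_lower_bound:
  fixes A :: "nat \<Rightarrow> nat \<Rightarrow> complex"
  assumes diag: "\<And>k. k < n \<Longrightarrow> A k k = 1"
    and bnd: "\<And>k l. k < n \<Longrightarrow> l < n \<Longrightarrow> k \<noteq> l \<Longrightarrow> cmod (A k l) \<le> \<nu>" and nu: "0 \<le> \<nu>"
  shows "(1 - (real n - 1) * \<nu>) * vec2norm n v \<le> vec2norm n (mat_app n A v)"
proof -
  define E where "E = (\<lambda>k. \<Sum>l\<in>{..<n}-{k}. A k l * v l)"
  have "vec2norm n (mat_app n A v) = vec2norm n (\<lambda>k. v k + E k)"
    using diag by (intro vec2norm_cong) (simp add: mat_app_def E_def sum.remove)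
  moreover have "vec2norm n E \<le> (real n - 1) * \<nu> * vec2norm n v"
    unfolding E_def by (rule offdiag_norm_le[OF bnd nu])
  ultimately show ?thesis
    using vec2norm_reverse_triangle[of n v E] by (simp add: algebra_simps)
qed

section \<open>Block structure of the correlations\<close>

lemma sum_blocks:
  fixes M d :: nat
  shows "(\<Sum>c<M * d. g c) = (\<Sum>i<M. \<Sum>l<d. g (i * d + l))"
proof -
  have "(\<Sum>c<M * d. g c) = (\<Sum>i<M. sum g {i * d..<i * d + d})"
    using sum.nat_group[where g=g and k=d and n=M] by simp
  also have "\<dots> = (\<Sum>i<M. \<Sum>l<d. g (i * d + l))"
  proof (rule sum.cong[OF refl])
    fix i
    show "sum g {i * d..<i * d + d} = (\<Sum>l<d. g (i * d + l))"
      using sum.shift_bounds_nat_ivl[of g 0 "i * d" d] by (simp add: atLeast0LessThan add.commute)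
  qed
  finally show ?thesis .
qed

lemma blk_adj_vec_decomp:
  "blk_adj_vec L d D j (\<lambda>r. mat_vec (M * d) D x r + w r)
     = (\<lambda>k. (\<Sum>i\<in>blk_supp M d x. mat_app d (blk_gram L d D j i) (blk d x i) k)
            + blk_adj_vec L d D j w k)"
proof
  fix k
  let ?S = "blk_supp M d x"
  let ?t = "\<lambda>i l. \<Sum>r<L. cnj (D r (j * d + k)) * D r (i * d + l) * x (i * d + l)"
  have "(\<Sum>r<L. \<Sum>c<M * d. cnj (D r (j * d + k)) * D r c * x c)
          = (\<Sum>c<M * d. \<Sum>r<L. cnj (D r (j * d + k)) * D r c * x c)"
    by (rule sum.swap)
  also have "\<dots> = (\<Sum>i<M. \<Sum>l<d. ?t i l)"
    by (rule sum_blocks)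
  also have "\<dots> = (\<Sum>i\<in>?S. \<Sum>l<d. ?t i l)"
    by (rule sum.mono_neutral_right) (auto simp: blk_supp_def)
  also have "\<dots> = (\<Sum>i\<in>?S. mat_app d (blk_gram L d D j i) (blk d x i) k)"
    unfolding mat_app_def blk_gram_def blk_def by (simp add: sum_distrib_right)
  finally show "blk_adj_vec L d D j (\<lambda>r. mat_vec (M * d) D x r + w r) k
      = (\<Sum>i\<in>?S. mat_app d (blk_gram L d D j i) (blk d x i) k) + blk_adj_vec L d D j w k"
    unfolding blk_adj_vec_def mat_vec_def
    by (simp add: distrib_left sum.distrib sum_distrib_left mult.assoc)
qed

lemma blk_supp_subset: "blk_supp M d x \<subseteq> {..<M}"
  by (auto simp: blk_supp_def)

lemma finite_blk_supp: "finite (blk_supp M d x)"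
  by (rule finite_subset[OF blk_supp_subset]) simp

lemma blk_supp_nonempty:
  assumes "0 < d" and "c < M * d" and "x c \<noteq> 0"
  shows "blk_supp M d x \<noteq> {}"
proof -
  have "c div d < M" using assms by (simp add: less_mult_imp_div_less)
  moreover have "x (c div d * d + c mod d) \<noteq> 0" using assms(3) by simp
  moreover have "c mod d < d" using assms(1) by simp
  ultimately have "c div d \<in> blk_supp M d x"
    unfolding blk_supp_def by blast
  then show ?thesis by blast
qed

section \<open>Coherence bounds\<close>

lemma blk_gram_diag:
  assumes unit_cols: "\<forall>c<M * d. (\<Sum>r<L. (cmod (D r c))\<^sup>2) = 1" and "j < M" "k < d"
  shows "blk_gram L d D j j k k = 1"
proof -
  have column: "j * d + k < M * d"
    using assms(2,3) mult_le_mono1[of "Suc j" M d] by simp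
  have "cnj z * z = complex_of_real ((cmod z)\<^sup>2)" for z
    using complex_norm_square[of z] by (simp only: mult.commute)
  then have "blk_gram L d D j j k k = complex_of_real (\<Sum>r<L. (cmod (D r (j * d + k)))\<^sup>2)"
    unfolding blk_gram_def of_real_sum by simp
  then show ?thesis using unit_cols column by simp
qed

lemma finite_sub_coherence_set:
  fixes L M d :: nat and D :: "nat \<Rightarrow> nat \<Rightarrow> complex"
  shows "finite {cmod (\<Sum>r<L. cnj (D r (l * d + a)) * D r (l * d + b)) | l a b.
             l < M \<and> a < d \<and> b < d \<and> a \<noteq> b}"
proof (rule finite_subset)
  show "finite ((\<lambda>(l, a, b). cmod (\<Sum>r<L. cnj (D r (l * d + a)) * D r (l * d + b)))
                  ` ({..<M} \<times> {..<d} \<times> {..<d}))"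
    by simp
qed (auto simp: image_iff, blast)

lemma finite_block_coherence_set:
  "finite {spec_norm d (blk_gram L d D i j) / real d | i j. i < M \<and> j < M \<and> i \<noteq> j}"
  by (rule finite_subset[where B = "(\<lambda>(i, j). spec_norm d (blk_gram L d D i j) / real d)
                                      ` ({..<M} \<times> {..<M})"]) (auto simp: image_iff)

lemma sub_coherence_bound:
  assumes "j < M" "a < d" "b < d" "a \<noteq> b"
  shows "cmod (blk_gram L d D j j a b) \<le> sub_coherence L M d D"
  unfolding sub_coherence_def blk_gram_def
  using assms finite_sub_coherence_set by (intro Max_ge) blast+

lemma sub_coherence_nonneg: "0 \<le> sub_coherence L M d D"
  unfolding sub_coherence_def using finite_sub_coherence_set by (intro Max_ge) auto

lemma block_coherence_bound:
  assumes "0 < d" "i < M" "j < M" "i \<noteq> j"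
  shows "spec_norm d (blk_gram L d D i j) \<le> real d * block_coherence L M d D"
proof -
  have "spec_norm d (blk_gram L d D i j) / real d \<le> block_coherence L M d D"
    unfolding block_coherence_def using assms finite_block_coherence_set by (intro Max_ge) blast+
  then show ?thesis using assms(1) by (simp add: field_simps)
qed

lemma block_coherence_nonneg: "0 \<le> block_coherence L M d D"
  unfolding block_coherence_def using finite_block_coherence_set by (intro Max_ge) auto

section \<open>Correlation estimates on and off the support\<close>

text \<open>Off the support only interference and noise contribute.\<close>
lemma correlation_off_support:
  assumes d: "0 < d" and j: "j < M" "j \<notin> blk_supp M d x"
    and X: "\<And>i. i \<in> blk_supp M d x \<Longrightarrow> vec2norm d (blk d x i) \<le> X"
    and noise: "vec2norm d (blk_adj_vec L d D j w) < \<tau>"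
  shows "vec2norm d (blk_adj_vec L d D j (\<lambda>r. mat_vec (M * d) D x r + w r))
           < real (card (blk_supp M d x)) * (real d * block_coherence L M d D * X) + \<tau>"
proof -
  let ?S = "blk_supp M d x"
  let ?I = "\<lambda>k. \<Sum>i\<in>?S. mat_app d (blk_gram L d D j i) (blk d x i) k"
  have "vec2norm d ?I \<le> real (card ?S) * (real d * block_coherence L M d D * X)"
    using d j blk_supp_subset[of M d x] X
    by (intro sum_mat_app_norm_le finite_blk_supp block_coherence_bound) auto
  moreover have "vec2norm d (blk_adj_vec L d D j (\<lambda>r. mat_vec (M * d) D x r + w r))
                   \<le> vec2norm d ?I + vec2norm d (blk_adj_vec L d D j w)"
    unfolding blk_adj_vec_decomp by (rule vec2norm_add)
  ultimately show ?thesis using noise by linarith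
qed

text \<open>On the support the own block is almost preserved, the other s - 1 blocks interfere.\<close>
lemma correlation_on_support:
  assumes "0 < d" and unit_cols: "\<forall>c<M * d. (\<Sum>r<L. (cmod (D r c))\<^sup>2) = 1"
    and j: "j \<in> blk_supp M d x"
    and X: "\<And>i. i \<in> blk_supp M d x \<Longrightarrow> vec2norm d (blk d x i) \<le> X"
    and noise: "vec2norm d (blk_adj_vec L d D j w) < \<tau>"
  shows "(1 - (real d - 1) * sub_coherence L M d D) * vec2norm d (blk d x j)
           - (real (card (blk_supp M d x)) - 1) * (real d * block_coherence L M d D * X) - \<tau>
         < vec2norm d (blk_adj_vec L d D j (\<lambda>r. mat_vec (M * d) D x r + w r))"
proof -
  let ?S = "blk_supp M d x" and ?G = "blk_gram L d D"
  define C where "C = (\<lambda>k. \<Sum>i\<in>?S-{j}. mat_app d (?G j i) (blk d x i) k)"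
  define W where "W = blk_adj_vec L d D j w"
  have jM: "j < M" using j blk_supp_subset by blast
  have own: "(1 - (real d - 1) * sub_coherence L M d D) * vec2norm d (blk d x j)
               \<le> vec2norm d (mat_app d (?G j j) (blk d x j))"
    by (intro near_identity_lower_bound blk_gram_diag[OF unit_cols jM]
          sub_coherence_bound[OF jM] sub_coherence_nonneg)
  have "0 < card ?S" using j finite_blk_supp[of M d x] card_gt_0_iff by blast
  then have card: "real (card (?S - {j})) = real (card ?S) - 1"
    using j finite_blk_supp[of M d x] by (simp add: Suc_le_eq of_nat_diff)
  have "vec2norm d C \<le> real (card (?S - {j})) * (real d * block_coherence L M d D * X)"
    unfolding C_def using assms(1) jM blk_supp_subset[of M d x] X
    by (intro sum_mat_app_norm_le block_coherence_bound) (auto simp: finite_blk_supp)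
  then have C: "vec2norm d C \<le> (real (card ?S) - 1) * (real d * block_coherence L M d D * X)"
    unfolding card .
  have "blk_adj_vec L d D j (\<lambda>r. mat_vec (M * d) D x r + w r)
          = (\<lambda>k. mat_app d (?G j j) (blk d x j) k + (C k + W k))"
    unfolding blk_adj_vec_decomp C_def W_def sum.remove[OF finite_blk_supp j] by (simp add: add.assoc)
  then have "vec2norm d (mat_app d (?G j j) (blk d x j)) - (vec2norm d C + vec2norm d W)
               \<le> vec2norm d (blk_adj_vec L d D j (\<lambda>r. mat_vec (M * d) D x r + w r))"
    using vec2norm_reverse_triangle[of d "mat_app d (?G j j) (blk d x j)" "\<lambda>k. C k + W k"]
      vec2norm_add[of d C W] by simp
  then show ?thesis using own C noise unfolding W_def by linarith
qed

lemma max0_less: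
  assumes "finite A" "0 < B" "\<And>j. j \<in> A \<Longrightarrow> f j < B"
  shows "max0 A f < B"
  unfolding max0_def using assms by (subst Max_less_iff) auto

lemma threshold_separation:
  fixes f g :: "nat \<Rightarrow> real"
  assumes S: "finite S" "S \<noteq> {}" and g: "\<And>j. j \<in> S \<Longrightarrow> 0 \<le> g j"
    and lower: "\<And>j. j \<in> S \<Longrightarrow> c * g j - (s - 1) * P - \<tau> < f j"
    and outside: "max0 A f < s * P + \<tau>"
    and s: "1 \<le> s" and P: "0 \<le> P" and \<tau>: "0 \<le> \<tau>"
  shows "(c * Max (g ` S) > 2 * \<tau> + (2 * s - 1) * P \<longrightarrow> Max (f ` S) > max0 A f)
       \<and> (c * Min (g ` S) > 2 * \<tau> + (2 * s - 1) * P \<longrightarrow> Min (f ` S) > max0 A f)"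
proof (intro conjI impI)
  assume h: "c * Max (g ` S) > 2 * \<tau> + (2 * s - 1) * P"
  have "Max (g ` S) \<in> g ` S" using S by simp
  then obtain j where j: "j \<in> S" "g j = Max (g ` S)" by auto
  have "f j \<le> Max (f ` S)" using S j by simp
  then show "Max (f ` S) > max0 A f"
    using lower[OF j(1)] j(2) h outside by (simp add: algebra_simps)
next
  assume h: "c * Min (g ` S) > 2 * \<tau> + (2 * s - 1) * P"
  have gmin: "Min (g ` S) \<le> g j" "0 \<le> Min (g ` S)" if "j \<in> S" for j
    using S that g by auto
  have "0 \<le> 2 * \<tau> + (2 * s - 1) * P" using s P \<tau> by simp
  then have c: "0 < c"
    using h gmin(2) S(2) by (metis ex_in_conv less_le_trans mult_nonpos_nonneg not_less)
  have "s * P + \<tau> < f j" if "j \<in> S" for j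
    using lower[OF that] h mult_left_mono[OF gmin(1)[OF that] less_imp_le[OF c]]
    by (simp add: algebra_simps)
  then show "Min (f ` S) > max0 A f"
    using outside S by (subst Min_gr_iff) (auto intro: less_trans)
qed

theorem lemma2:
  fixes L M d :: nat and D :: "nat \<Rightarrow> nat \<Rightarrow> complex" and x w :: "nat \<Rightarrow> complex"
    and \<tau> :: real
  defines "N \<equiv> M * d"
    and "S \<equiv> blk_supp M d x"
    and "s \<equiv> card (blk_supp M d x)"
    and "y \<equiv> (\<lambda>r. mat_vec (M * d) D x r + w r)"
    and "\<mu>B \<equiv> block_coherence L M d D"
    and "\<nu> \<equiv> sub_coherence L M d D"
    and "xmax \<equiv> Max ((\<lambda>i. vec2norm d (blk d x i)) ` blk_supp M d x)"
    and "xmin \<equiv> Min ((\<lambda>i. vec2norm d (blk d x i)) ` blk_supp M d x)"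
  assumes "1 \<le> d" and "1 \<le> M"
    and unit_cols: "\<forall>c<N. (\<Sum>r<L. (cmod (D r c))\<^sup>2) = 1"
    and x_nz: "\<exists>c<N. x c \<noteq> 0"
    and tau_pos: "\<tau> > 0"
    and noise: "\<forall>j<M. vec2norm d (blk_adj_vec L d D j w) < \<tau>"
  shows "((1 - (real d - 1) * \<nu>) * xmax > 2 * \<tau> + (2 * real s - 1) * real d * \<mu>B * xmax
            \<longrightarrow> Max ((\<lambda>j. vec2norm d (blk_adj_vec L d D j y)) ` S)
                > max0 ({..<M} - S) (\<lambda>j. vec2norm d (blk_adj_vec L d D j y)))
       \<and> ((1 - (real d - 1) * \<nu>) * xmin > 2 * \<tau> + (2 * real s - 1) * real d * \<mu>B * xmax
            \<longrightarrow> Min ((\<lambda>j. vec2norm d (blk_adj_vec L d D j y)) ` S)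
                > max0 ({..<M} - S) (\<lambda>j. vec2norm d (blk_adj_vec L d D j y)))"
proof -
  let ?nx = "\<lambda>i. vec2norm d (blk d x i)"
  define P where "P = real d * \<mu>B * xmax"
  have d: "0 < d" using \<open>1 \<le> d\<close> by simp
  have S: "finite S" "S \<noteq> {}"
    using finite_blk_supp blk_supp_nonempty[OF d] x_nz unfolding S_def N_def by blast+
  then have s: "1 \<le> real s" by (simp add: s_def S_def Suc_leI card_gt_0_iff)
  have extremes: "xmax = Max (?nx ` S)" "xmin = Min (?nx ` S)"
    unfolding xmax_def xmin_def S_def by simp_all
  have nx_le: "?nx i \<le> xmax" if "i \<in> S" for i
    using S that unfolding extremes by simp
  have P: "0 \<le> P"
    using S nx_le vec2norm_nonneg block_coherence_nonneg unfolding P_def \<mu>B_def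
    by (metis ex_in_conv mult_nonneg_nonneg of_nat_0_le_iff order.trans)
  have lower: "(1 - (real d - 1) * \<nu>) * ?nx j - (real s - 1) * P - \<tau>
                 < vec2norm d (blk_adj_vec L d D j y)" if "j \<in> S" for j
    using correlation_on_support[OF d unit_cols[unfolded N_def] that[unfolded S_def]
        nx_le[unfolded S_def]] noise that blk_supp_subset
    unfolding y_def S_def s_def P_def \<mu>B_def \<nu>_def by blast
  have "0 < real s * P + \<tau>" using s P tau_pos by (simp add: add_nonneg_pos)
  then have outside: "max0 ({..<M} - S) (\<lambda>j. vec2norm d (blk_adj_vec L d D j y)) < real s * P + \<tau>"
    using correlation_off_support[OF d] noise nx_le
    unfolding y_def S_def s_def P_def \<mu>B_def by (intro max0_less) auto
  have threshold: "(2 * real s - 1) * real d * \<mu>B * xmax = (2 * real s - 1) * P"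
    unfolding P_def by (simp add: mult_ac)
  show ?thesis unfolding threshold
    using threshold_separation[OF S _ lower outside s P, folded extremes] vec2norm_nonneg tau_pos
    by simp
qed

end
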